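(* Let $k_1<\tfrac12$. Let $J'=(z_w,z_w')$ be a nonempty open interval, let $r:J'\to\mathbb{R}$ be differentiable, and let $h:J'\to\mathbb{R}$ be differentiable with $\dot h(z)=1+h(z)^2-2r(z)h(z)$ on $J'$, having exactly one zero $z_*\in J'$. Let $G(z)=z-\dfrac{2h(z)}{2+h(z)^2-2r(z)h(z)}$ and $z_{n+1}=G(z_n)$. (1) If $r(z)>0$ and $\dot r(z)<k_1$ for all $z\in(z_w,z_* )$, then for every $z_0\in(z_w,z_* )$ the iterates are well defined and $(z_n)$ increases monotonically to $z_*$. (2) If $r(z)<0$ and $\dot r(z)<k_1$ for all $z\in(z_*,z_w')$, then for every $z_0\in(z_*,z_w')$ the iterates are well defined and $(z_n)$ decreases monotonically to $z_*$.
   Context: $\dot{}$ denotes differentiation with respect to $z$. Here $h<0$ on $(z_w,z_* )$ and $h>0$ on $(z_*,z_w')$. *)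

theory Defs
  imports "HOL-Analysis.Analysis"
begin

definition newtonG :: "(real \<Rightarrow> real) \<Rightarrow> (real \<Rightarrow> real) \<Rightarrow> real \<Rightarrow> real" where
  "newtonG h r z = z - 2 * h z / (2 + (h z)^2 - 2 * r z * h z)"

end

theory Submission
  imports Defs
begin

(*
  Write D = 2 + h^2 - 2 r h for the denominator of G. Using the Riccati equation one finds
  G' = (q^2 + 2 q h^2 + h^2 (2 - 4 r')) / D^2 with q = h^2 - 2 r h. Left of zs, where h < 0
  because h'(zs) = 1 > 0, the hypothesis r > 0 gives r h < 0, hence q >= 0 and D > 0, so G' > 0
  as r' < 1/2. Thus G is increasing with G(zs) = zs and G(z) - z = -2h/D > 0, i.e.
  z < G(z) < zs: the iterates increase, stay below zs, and their limit is a fixed point of G,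
  i.e. a zero of h, which must be zs. The right-hand case reduces to the left-hand one by the
  point reflection h(z), r(z) |-> -h(-z), -r(-z), which preserves the Riccati equation and
  conjugates G.
*)

lemma has_real_derivative_newtonG:
  fixes h r :: "real \<Rightarrow> real"
  assumes h_deriv: "(h has_real_derivative (1 + (h z)^2 - 2 * r z * h z)) (at z)"
    and r_deriv: "(r has_real_derivative c) (at z)"
    and denom: "2 + (h z)^2 - 2 * r z * h z \<noteq> 0"
  defines "q \<equiv> (h z)^2 - 2 * r z * h z"
  shows "(newtonG h r has_real_derivative
           (q^2 + 2 * q * (h z)^2 + (h z)^2 * (2 - 4 * c)) / (2 + q)^2) (at z)"
proof -
  have h': "(h has_real_derivative 1 + q) (at z)"
    using h_deriv by (simp add: q_def add_diff_eq)
  have "(newtonG h r has_real_derivative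
      1 - (2 * (1 + q) * (2 + q)
           - 2 * h z * (2 * h z * (1 + q) - 2 * (c * h z + r z * (1 + q)))) / (2 + q)^2) (at z)"
    unfolding newtonG_def[abs_def]
    by (rule derivative_eq_intros h' r_deriv refl)+
      (use denom in \<open>simp_all add: q_def power2_eq_square algebra_simps\<close>)
  moreover have "1 - (2 * (1 + q) * (2 + q)
                       - 2 * h z * (2 * h z * (1 + q) - 2 * (c * h z + r z * (1 + q)))) / (2 + q)^2
                 = (q^2 + 2 * q * (h z)^2 + (h z)^2 * (2 - 4 * c)) / (2 + q)^2"
    using denom unfolding q_def
    by (simp add: field_simps) (simp add: algebra_simps power2_eq_square eval_nat_numeral)
  ultimately show ?thesis by simp
qed

lemma newtonG_has_pos_derivative:
  fixes h r :: "real \<Rightarrow> real"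
  assumes h_deriv: "(h has_real_derivative (1 + (h z)^2 - 2 * r z * h z)) (at z)"
    and r_deriv: "(r has_real_derivative c) (at z)"
    and "h z \<noteq> 0" "r z * h z \<le> 0" "c < 1/2"
  shows "\<exists>y>0. (newtonG h r has_real_derivative y) (at z)"
proof -
  define q where "q = (h z)^2 - 2 * r z * h z"
  have q: "q \<ge> 0"
    unfolding q_def using \<open>r z * h z \<le> 0\<close> zero_le_power2[of "h z"] by (simp only: mult.assoc)
  have "(h z)^2 * (2 - 4 * c) > 0" using \<open>h z \<noteq> 0\<close> \<open>c < 1/2\<close> by simp
  then have "(q^2 + 2 * q * (h z)^2 + (h z)^2 * (2 - 4 * c)) / (2 + q)^2 > 0"
    using q by (intro divide_pos_pos) (auto intro!: add_nonneg_pos)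
  moreover have "2 + (h z)^2 - 2 * r z * h z \<noteq> 0" using q by (simp add: q_def)
  ultimately show ?thesis
    using has_real_derivative_newtonG[OF h_deriv r_deriv] unfolding q_def by blast
qed

lemma neg_left_of_zero_with_pos_derivative:
  fixes h :: "real \<Rightarrow> real"
  assumes cont: "continuous_on {a<..zs} h"
    and deriv: "(h has_real_derivative d) (at zs)" "d > 0"
    and zero: "h zs = 0" and no_zero: "\<And>z. z \<in> {a<..<zs} \<Longrightarrow> h z \<noteq> 0"
    and z: "z \<in> {a<..<zs}"
  shows "h z < 0"
proof (rule ccontr)
  assume "\<not> h z < 0"
  obtain e where e: "e > 0" "\<And>t. 0 < t \<Longrightarrow> t < e \<Longrightarrow> h (zs - t) < 0"
    using DERIV_pos_inc_left[OF deriv] unfolding zero by auto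
  define t where "t = min (e/2) (zs - z)"
  have t: "0 < t" "t < e" "z \<le> zs - t" using e z by (auto simp: t_def)
  have "continuous_on {z..zs - t} h"
    using t z by (auto intro: continuous_on_subset[OF cont])
  then obtain x where "z \<le> x" "x \<le> zs - t" "h x = 0"
    using IVT2'[of h "zs - t" 0 z] e(2)[OF t(1,2)] \<open>\<not> h z < 0\<close> t(3) by auto
  then show False using no_zero[of x] z t by auto
qed

lemma iterates_incseq_tendsto:
  fixes f :: "real \<Rightarrow> real"
  assumes step: "\<And>z. z \<in> {a<..<c} \<Longrightarrow> z < f z \<and> f z < c"
    and cont: "\<And>z. z \<in> {a<..<c} \<Longrightarrow> isCont f z"
    and z0: "z0 \<in> {a<..<c}"
  shows "(\<forall>n. (f ^^ n) z0 \<in> {a<..<c}) \<and> incseq (\<lambda>n. (f ^^ n) z0)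
           \<and> (\<lambda>n. (f ^^ n) z0) \<longlonglongrightarrow> c"
proof -
  define x where "x n = (f ^^ n) z0" for n
  have x_Suc: "x (Suc n) = f (x n)" for n by (simp add: x_def)
  have x_in: "x n \<in> {a<..<c}" for n
  proof (induction n)
    case 0
    then show ?case using z0 by (simp add: x_def)
  next
    case (Suc n)
    then show ?case using step[OF Suc] by (auto simp: x_Suc)
  qed
  have inc: "incseq x" using x_in step by (intro incseq_SucI) (simp add: x_Suc less_imp_le)
  have bdd: "bdd_above (range x)" using x_in by (intro bdd_aboveI[of _ c]) (auto intro: less_imp_le)
  define L where "L = (SUP n. x n)"
  have lim: "x \<longlonglongrightarrow> L" unfolding L_def by (rule LIMSEQ_incseq_SUP[OF bdd inc])
  have "x 0 \<le> L" unfolding L_def using bdd by (rule cSUP_upper[rotated]) simp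
  moreover have "L \<le> c" unfolding L_def using x_in by (intro cSUP_least) (auto intro: less_imp_le)
  moreover have "L \<noteq> c \<Longrightarrow> False"
  proof -
    assume "L \<noteq> c"
    with calculation have L: "L \<in> {a<..<c}" using x_in[of 0] by auto
    have "(\<lambda>n. f (x n)) \<longlonglongrightarrow> f L" using isCont_tendsto_compose[OF cont[OF L] lim] .
    moreover have "(\<lambda>n. f (x n)) \<longlonglongrightarrow> L" using LIMSEQ_Suc[OF lim] by (simp add: x_Suc)
    ultimately have "f L = L" using LIMSEQ_unique by blast
    then show False using step[OF L] by simp
  qed
  ultimately show ?thesis using x_in inc lim unfolding x_def by blast
qed

locale riccati_left_of_zero =
  fixes h r :: "real \<Rightarrow> real" and zw zs :: real
  assumes h_ode: "\<And>z. z \<in> {zw<..zs} \<Longrightarrow>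
                    (h has_real_derivative (1 + (h z)^2 - 2 * r z * h z)) (at z)"
    and r_diff: "\<And>z. z \<in> {zw<..zs} \<Longrightarrow> r differentiable (at z)"
    and h_zs: "h zs = 0"
    and no_zero: "\<And>z. z \<in> {zw<..<zs} \<Longrightarrow> h z \<noteq> 0"
    and r_pos: "\<And>z. z \<in> {zw<..<zs} \<Longrightarrow> r z > 0"
    and deriv_r_less: "\<And>z. z \<in> {zw<..<zs} \<Longrightarrow> deriv r z < 1/2"
begin

lemma h_neg:
  assumes "z \<in> {zw<..<zs}"
  shows "h z < 0"
proof (rule neg_left_of_zero_with_pos_derivative[where h = h and a = zw and zs = zs and d = 1])
  show "continuous_on {zw<..zs} h"
    using h_ode by (intro continuous_at_imp_continuous_on ballI DERIV_isCont) blast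
  show "(h has_real_derivative 1) (at zs)"
    using h_ode[of zs] assms h_zs by simp
qed (use h_zs no_zero assms in auto)

lemma denom_pos:
  assumes "z \<in> {zw<..zs}"
  shows "2 + (h z)^2 - 2 * r z * h z > 0"
proof (cases "z = zs")
  case False
  then have "r z * h z < 0" using assms h_neg r_pos by (auto intro: mult_pos_neg)
  then show ?thesis using zero_le_power2[of "h z"] by (simp only: mult.assoc)
qed (simp add: h_zs)

lemma r_has_deriv: "z \<in> {zw<..zs} \<Longrightarrow> (r has_real_derivative deriv r z) (at z)"
  using r_diff DERIV_deriv_iff_real_differentiable by blast

lemma newtonG_isCont:
  assumes "z \<in> {zw<..zs}"
  shows "isCont (newtonG h r) z"
proof -
  have "2 + (h z)^2 - 2 * r z * h z \<noteq> 0" using denom_pos[OF assms] by simp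
  then show ?thesis
    by (rule has_real_derivative_newtonG[OF h_ode[OF assms] r_has_deriv[OF assms], THEN DERIV_isCont])
qed

lemma newtonG_step:
  assumes z: "z \<in> {zw<..<zs}"
  shows "z < newtonG h r z \<and> newtonG h r z < zs"
proof
  have "2 * h z / (2 + (h z)^2 - 2 * r z * h z) < 0"
    using h_neg[OF z] denom_pos z by (intro divide_neg_pos) auto
  then show "z < newtonG h r z" by (simp add: newtonG_def)
  have "newtonG h r z < newtonG h r zs"
  proof (rule DERIV_pos_imp_increasing_open[where f = "newtonG h r"])
    fix x assume "z < x" "x < zs"
    with z have x: "x \<in> {zw<..<zs}" by auto
    have "r x * h x \<le> 0"
      using h_neg[OF x] r_pos[OF x] by (simp add: mult_pos_neg less_imp_le)
    then show "\<exists>y. (newtonG h r has_real_derivative y) (at x) \<and> y > 0"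
      using newtonG_has_pos_derivative[OF h_ode r_has_deriv no_zero[OF x] _ deriv_r_less[OF x]] x by auto
  next
    show "continuous_on {z..zs} (newtonG h r)"
      using z by (intro continuous_at_imp_continuous_on ballI newtonG_isCont) auto
  qed (use z in simp)
  then show "newtonG h r z < zs" by (simp add: newtonG_def h_zs)
qed

lemma newtonG_iterates:
  assumes "z0 \<in> {zw<..<zs}"
  shows "(\<forall>n. (newtonG h r ^^ n) z0 \<in> {zw<..<zs} \<and>
              2 + (h ((newtonG h r ^^ n) z0))^2
                - 2 * r ((newtonG h r ^^ n) z0) * h ((newtonG h r ^^ n) z0) > 0) \<and>
         incseq (\<lambda>n. (newtonG h r ^^ n) z0) \<and> (\<lambda>n. (newtonG h r ^^ n) z0) \<longlonglongrightarrow> zs"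
  using iterates_incseq_tendsto[OF newtonG_step newtonG_isCont assms] denom_pos by fastforce

end

definition point_mirror :: "(real \<Rightarrow> real) \<Rightarrow> real \<Rightarrow> real" where
  "point_mirror f z = - f (- z)"

lemma funpow_point_mirror: "point_mirror f ^^ n = point_mirror (f ^^ n)"
  by (induction n) (auto simp: point_mirror_def)

lemma newtonG_point_mirror: "newtonG (point_mirror h) (point_mirror r) = point_mirror (newtonG h r)"
  by (auto simp: fun_eq_iff newtonG_def point_mirror_def)

lemma has_real_derivative_point_mirror:
  "(f has_real_derivative d) (at (- z)) \<Longrightarrow> (point_mirror f has_real_derivative d) (at z)"
  unfolding point_mirror_def[abs_def] by (drule DERIV_mirror[THEN iffD1], drule DERIV_minus) simp

lemma deriv_point_mirror:
  "f differentiable (at (- z)) \<Longrightarrow> deriv (point_mirror f) z = deriv f (- z)"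
  by (intro DERIV_imp_deriv has_real_derivative_point_mirror)
    (simp add: DERIV_deriv_iff_real_differentiable)

lemma differentiable_point_mirror:
  "f differentiable (at (- z)) \<Longrightarrow> point_mirror f differentiable (at z)"
  using has_real_derivative_point_mirror real_differentiable_def by blast

locale riccati_unique_zero =
  fixes h r :: "real \<Rightarrow> real" and zw zw' zs :: real
  assumes r_diff: "\<forall>z\<in>{zw<..<zw'}. r differentiable (at z)"
    and h_ode: "\<forall>z\<in>{zw<..<zw'}. (h has_real_derivative (1 + (h z)^2 - 2 * r z * h z)) (at z)"
    and zs_in: "zs \<in> {zw<..<zw'}" and h_zs: "h zs = 0"
    and zs_unique: "\<forall>z\<in>{zw<..<zw'}. h z = 0 \<longrightarrow> z = zs"
begin

lemma left_side:
  assumes "\<forall>z\<in>{zw<..<zs}. r z > 0 \<and> deriv r z < k" "k < 1/2"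
  shows "riccati_left_of_zero h r zw zs"
proof
  fix z assume "z \<in> {zw<..zs}"
  then have "z \<in> {zw<..<zw'}" using zs_in by auto
  then show "(h has_real_derivative 1 + (h z)^2 - 2 * r z * h z) (at z)" "r differentiable (at z)"
    using h_ode r_diff by blast+
next
  fix z assume z: "z \<in> {zw<..<zs}"
  then show "h z \<noteq> 0" using zs_unique zs_in by fastforce
  have "r z > 0 \<and> deriv r z < k" using assms(1) z by blast
  then show "r z > 0" "deriv r z < 1/2" using assms(2) by auto
qed (rule h_zs)

lemma mirrored_right_side:
  assumes "\<forall>z\<in>{zs<..<zw'}. r z < 0 \<and> deriv r z < k" "k < 1/2"
  shows "riccati_left_of_zero (point_mirror h) (point_mirror r) (- zw') (- zs)"
proof
  fix z assume "z \<in> {- zw'<..- zs}"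
  then have z: "- z \<in> {zw<..<zw'}" using zs_in by auto
  show "(point_mirror h has_real_derivative
         1 + (point_mirror h z)^2 - 2 * point_mirror r z * point_mirror h z) (at z)"
    using has_real_derivative_point_mirror[OF h_ode[rule_format, OF z]]
    by (simp add: point_mirror_def)
  show "point_mirror r differentiable (at z)"
    using differentiable_point_mirror r_diff z by blast
next
  fix z assume "z \<in> {- zw'<..<- zs}"
  then have z: "- z \<in> {zs<..<zw'}" by auto
  then show "point_mirror h z \<noteq> 0" using zs_unique zs_in by (fastforce simp: point_mirror_def)
  have "r (- z) < 0 \<and> deriv r (- z) < k" using assms(1) z by blast
  moreover have "deriv (point_mirror r) z = deriv r (- z)"
    using deriv_point_mirror r_diff z zs_in by auto
  ultimately show "point_mirror r z > 0" "deriv (point_mirror r) z < 1/2"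
    using assms(2) by (auto simp: point_mirror_def)
qed (simp add: point_mirror_def h_zs)

lemma newtonG_iterates_from_right:
  assumes "\<forall>z\<in>{zs<..<zw'}. r z < 0 \<and> deriv r z < k" "k < 1/2" "z0 \<in> {zs<..<zw'}"
  shows "(\<forall>n. (newtonG h r ^^ n) z0 \<in> {zs<..<zw'} \<and>
              2 + (h ((newtonG h r ^^ n) z0))^2
                - 2 * r ((newtonG h r ^^ n) z0) * h ((newtonG h r ^^ n) z0) > 0) \<and>
         decseq (\<lambda>n. (newtonG h r ^^ n) z0) \<and> (\<lambda>n. (newtonG h r ^^ n) z0) \<longlonglongrightarrow> zs"
proof -
  have "- z0 \<in> {- zw'<..<- zs}" using assms(3) by auto
  from riccati_left_of_zero.newtonG_iterates[OF mirrored_right_side[OF assms(1,2)] this]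
  have "(\<forall>n. - (newtonG h r ^^ n) z0 \<in> {- zw'<..<- zs} \<and>
              2 + (h ((newtonG h r ^^ n) z0))^2
                - 2 * r ((newtonG h r ^^ n) z0) * h ((newtonG h r ^^ n) z0) > 0) \<and>
        incseq (\<lambda>n. - (newtonG h r ^^ n) z0) \<and> (\<lambda>n. - (newtonG h r ^^ n) z0) \<longlonglongrightarrow> - zs"
    by (simp add: newtonG_point_mirror funpow_point_mirror point_mirror_def)
  then show ?thesis
    by (auto simp: incseq_def decseq_def tendsto_minus_cancel_left[symmetric])
qed

end

theorem theorem3p6:
  fixes k1 zw zw' zs :: real and r h :: "real \<Rightarrow> real"
  assumes k1: "k1 < 1/2"
    and J: "zw < zw'"
    and r_diff: "\<forall>z\<in>{zw<..<zw'}. r differentiable (at z)"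
    and h_ode: "\<forall>z\<in>{zw<..<zw'}.
                  (h has_real_derivative (1 + (h z)^2 - 2 * r z * h z)) (at z)"
    and zs_in: "zs \<in> {zw<..<zw'}" and h_zs: "h zs = 0"
    and zs_unique: "\<forall>z\<in>{zw<..<zw'}. h z = 0 \<longrightarrow> z = zs"
  shows
    "((\<forall>z\<in>{zw<..<zs}. r z > 0 \<and> deriv r z < k1) \<longrightarrow>
       (\<forall>z0\<in>{zw<..<zs}.
          (\<forall>n. ((newtonG h r) ^^ n) z0 \<in> {zw<..<zw'} \<and>
               2 + (h (((newtonG h r) ^^ n) z0))^2
                 - 2 * r (((newtonG h r) ^^ n) z0) * h (((newtonG h r) ^^ n) z0) \<noteq> 0) \<and>
          incseq (\<lambda>n. ((newtonG h r) ^^ n) z0) \<and>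
          (\<lambda>n. ((newtonG h r) ^^ n) z0) \<longlonglongrightarrow> zs))
     \<and>
     ((\<forall>z\<in>{zs<..<zw'}. r z < 0 \<and> deriv r z < k1) \<longrightarrow>
       (\<forall>z0\<in>{zs<..<zw'}.
          (\<forall>n. ((newtonG h r) ^^ n) z0 \<in> {zw<..<zw'} \<and>
               2 + (h (((newtonG h r) ^^ n) z0))^2
                 - 2 * r (((newtonG h r) ^^ n) z0) * h (((newtonG h r) ^^ n) z0) \<noteq> 0) \<and>
          decseq (\<lambda>n. ((newtonG h r) ^^ n) z0) \<and>
          (\<lambda>n. ((newtonG h r) ^^ n) z0) \<longlonglongrightarrow> zs))"
proof -
  interpret riccati_unique_zero h r zw zw' zs
    using r_diff h_ode zs_in h_zs zs_unique by unfold_locales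
  have sub: "{zw<..<zs} \<subseteq> {zw<..<zw'}" "{zs<..<zw'} \<subseteq> {zw<..<zw'}" using zs_in by auto
  show ?thesis
    using riccati_left_of_zero.newtonG_iterates[OF left_side[OF _ k1]]
      newtonG_iterates_from_right[OF _ k1] sub
    by (smt (verit) subsetD)
qed

end
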